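(* The category $\mathcal{C}$ does not have duals for objects.
   Context: $\mathcal{C}$ is the monoidal category whose objects are finite ordered subsets of $\mathbb{N}$ (possibly with repetitions), with monoidal product union and unit $\emptyset$, whose morphisms are complex matrices with rows and columns labeled by the two objects (composition being matrix product along the common label set, monoidal product of morphisms being direct sum). A monoidal category has duals for objects if every object $A$ has a dual object $A^*$ together with evaluation $e_A:A\otimes A^*\to\mathds{1}$ and coevaluation $i_A:\mathds{1}\to A^*\otimes A$ morphisms satisfying the usual adjunction (zig-zag) identities. Here, via the functor $\operatorname{sDet}$ (which sends a matrix $X$ with row labels $R$, column labels $S$ to $\sum_{I\subseteq R,J\subseteq S}\det(X_{I,J})|I\rangle\langle J|$ on tensor products of copies of $\mathbb{C}^2$), the evaluation for a single wire would have to correspond to the vector $|00\rangle+|11\rangle$. *)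

theory Defs
  imports Complex_Main "Jordan_Normal_Form.Matrix"
begin

text \<open>A morphism S \<rightarrow> R is a complex matrix whose rows are
  labelled by (the positions of) R and whose columns by (the positions of) S.\<close>

type_synonym obj = "nat list"
type_synonym morph = "complex mat"

definition C_hom :: "obj \<Rightarrow> obj \<Rightarrow> morph set" where
  "C_hom S R = carrier_mat (length R) (length S)"

definition C_id :: "obj \<Rightarrow> morph" where
  "C_id A = 1\<^sub>m (length A)"

definition C_comp :: "morph \<Rightarrow> morph \<Rightarrow> morph" where
  "C_comp g f = g * f"

definition C_unit :: obj where
  "C_unit = []"

definition C_tensor_obj :: "obj \<Rightarrow> obj \<Rightarrow> obj" where
  "C_tensor_obj A B = A @ B"

definition C_tensor :: "morph \<Rightarrow> morph \<Rightarrow> morph" where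
  "C_tensor f g = four_block_mat f (0\<^sub>m (dim_row f) (dim_col g))
                                   (0\<^sub>m (dim_row g) (dim_col f)) g"

text \<open>Duals for objects (strict monoidal category, so associators and unitors
  are identities): every A has A*, e_A : A \<otimes> A* \<rightarrow> 1, i_A : 1 \<rightarrow> A* \<otimes> A
  satisfying the two zig-zag identities.\<close>

definition C_has_duals :: bool where
  "C_has_duals \<longleftrightarrow>
    (\<forall>A. \<exists>Ad e i.
        e \<in> C_hom (C_tensor_obj A Ad) C_unit \<and>
        i \<in> C_hom C_unit (C_tensor_obj Ad A) \<and>
        C_comp (C_tensor e (C_id A)) (C_tensor (C_id A) i) = C_id A \<and>
        C_comp (C_tensor (C_id Ad) e) (C_tensor i (C_id Ad)) = C_id Ad)"

end

theory Submission
  imports Defs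
begin

text \<open>The unit object is the empty list, so a morphism into it has no rows and a morphism
  out of it has no columns. Hence the direct sums \<open>e \<oplus> 1\<close> and \<open>1 \<oplus> i\<close> in the first zig-zag
  identity are \<open>[0 | 1]\<close> and \<open>[1; 0]\<close>: their product is the shift by \<open>|A| + |A*|\<close>, which is
  never the identity once \<open>A\<close> is nonempty.\<close>

lemma C_tensor_no_rows_index:
  assumes "dim_row e = 0" "j < dim_row f" "l < dim_col e + dim_col f"
  shows "C_tensor e f $$ (j, l) = (if l < dim_col e then 0 else f $$ (j, l - dim_col e))"
  using assms by (simp add: C_tensor_def index_mat_four_block)

lemma C_tensor_no_cols_index:
  assumes "dim_col i = 0" "l < dim_row f + dim_row i" "k < dim_col f"
  shows "C_tensor f i $$ (l, k) = (if l < dim_row f then f $$ (l, k) else 0)"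
  using assms by (simp add: C_tensor_def index_mat_four_block)

lemma C_tensor_no_rows_mult_no_cols:
  assumes "dim_row e = 0" "dim_col i = 0" "dim_row i = dim_col e"
  shows "C_tensor e (1\<^sub>m n) * C_tensor (1\<^sub>m n) i
    = mat n n (\<lambda>(j, k). if k = dim_col e + j then 1 else 0)"
    (is "?L * ?R = ?shift")
proof (rule eq_matI)
  define c where "c = dim_col e"
  show "dim_row (?L * ?R) = dim_row ?shift" "dim_col (?L * ?R) = dim_col ?shift"
    using assms by (simp_all add: C_tensor_def)
  fix j k assume "j < dim_row ?shift" "k < dim_col ?shift"
  then have jk: "j < n" "k < n" by simp_all
  have dimL: "dim_row ?L = n" "dim_col ?L = c + n" and dimR: "dim_row ?R = n + c" "dim_col ?R = n"
    using assms by (simp_all add: C_tensor_def c_def)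
  have "(?L * ?R) $$ (j, k) = (\<Sum>l<c + n. ?L $$ (j, l) * ?R $$ (l, k))"
    using dimL dimR jk by (simp add: scalar_prod_def atLeast0LessThan add.commute)
  also have "\<dots> = (\<Sum>l<c + n. if l = c + j then (if l = k then 1 else 0) else 0)"
    using assms jk
    by (intro sum.cong) (auto simp: C_tensor_no_rows_index C_tensor_no_cols_index c_def)
  also have "\<dots> = (if k = c + j then 1 else 0)"
    using jk by simp
  finally show "(?L * ?R) $$ (j, k) = ?shift $$ (j, k)"
    using jk by (simp add: c_def)
qed

theorem mainTheorem6:
  shows "\<not> C_has_duals"
proof
  assume "C_has_duals"
  then obtain Ad e i where
    e: "e \<in> C_hom (C_tensor_obj [0] Ad) C_unit" and
    i: "i \<in> C_hom C_unit (C_tensor_obj Ad [0])" and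
    zigzag: "C_comp (C_tensor e (C_id [0])) (C_tensor (C_id [0]) i) = C_id [0]"
    unfolding C_has_duals_def by blast
  have dims: "dim_row e = 0" "dim_col i = 0" "dim_row i = dim_col e" "dim_col e = Suc (length Ad)"
    using e i by (auto simp: C_hom_def C_tensor_obj_def C_unit_def)
  have "C_tensor e (1\<^sub>m 1) * C_tensor (1\<^sub>m 1) i = 1\<^sub>m 1"
    using zigzag by (simp add: C_comp_def C_id_def)
  then have "mat 1 1 (\<lambda>(j, k). if k = dim_col e + j then 1 else 0) $$ (0, 0) = (1\<^sub>m 1 :: complex mat) $$ (0, 0)"
    using C_tensor_no_rows_mult_no_cols[OF dims(1-3)] by simp
  with dims(4) show False by simp
qed

end
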